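(* Let $\Gamma$ be a finite connected $(G,3)$-geodesic-transitive graph of girth $4$ or $5$, where $G\le \mathrm{Aut}(\Gamma)$. Let $N$ be a normal subgroup of $G$ having at least $3$ orbits on $V(\Gamma)$. Then $\Gamma$ is a cover of the normal quotient $\Gamma_N$, the graph $\Gamma_N$ is $(G/N,s')$-geodesic-transitive where $s'=\min\{3,\mathrm{diam}(\Gamma_N)\}$, and one of the following holds: (1) $\Gamma_N$ is a complete graph; (2) $\Gamma_N$ is a $(G/N,2)$-arc-transitive strongly regular graph with girth $4$ or $5$; (3) $\Gamma_N$ has diameter at least $3$ and the same girth as $\Gamma$.
   Context: All graphs are finite, simple and undirected. For a graph $\Gamma$, $d_\Gamma(u,v)$ denotes distance. An $s$-arc is a sequence $(v_0,\dots,v_s)$ of vertices with $v_i,v_{i+1}$ adjacent and $v_{j-1}\neq v_{j+1}$ for $1\le j\le s-1$. An $s$-geodesic is a path $(v_0,\dots,v_s)$ with $d_\Gamma(v_0,v_s)=s$. For $G\le\mathrm{Aut}(\Gamma)$, $\Gamma$ is $(G,s)$-geodesic-transitive if $\Gamma$ has an $s$-geodesic and $G$ is transitive on the set of $i$-geodesics for each $i\le s$ (the $0$-geodesics being vertices); $\Gamma$ is $(G,s)$-arc-transitive if $G$ is transitive on the set of $i$-arcs for each $i\le s$. For $N\trianglelefteq G$, the normal quotient $\Gamma_N$ is the graph whose vertices are the $N$-orbits on $V(\Gamma)$, two distinct orbits $B,C$ being adjacent iff some vertex of $B$ is adjacent to some vertex of $C$; $G/N$ acts on $\Gamma_N$.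 $\Gamma$ is a cover of $\Gamma_N$ if for each edge $\{B,C\}$ of $\Gamma_N$ and each $v\in B$, $v$ is adjacent to exactly one vertex of $C$. A strongly regular graph with parameters $(n,k,a,c)$ is a connected $k$-regular graph on $n$ vertices in which adjacent vertices have $a$ common neighbours and distinct non-adjacent vertices have $c$ common neighbours. *)

theory Defs
  imports "HOL-Algebra.Bij" "HOL-Algebra.Coset"
begin

definition simple_graph :: "'a set \<Rightarrow> ('a \<Rightarrow> 'a \<Rightarrow> bool) \<Rightarrow> bool" where
  "simple_graph V adj \<longleftrightarrow> finite V \<and> (\<forall>x y. adj x y \<longrightarrow> x \<in> V \<and> y \<in> V)
     \<and> (\<forall>x y. adj x y \<longrightarrow> adj y x) \<and> (\<forall>x. \<not> adj x x)"

definition walk :: "'a set \<Rightarrow> ('a \<Rightarrow> 'a \<Rightarrow> bool) \<Rightarrow> 'a list \<Rightarrow> bool" where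
  "walk V adj xs \<longleftrightarrow> xs \<noteq> [] \<and> set xs \<subseteq> V \<and>
     (\<forall>i. i + 1 < length xs \<longrightarrow> adj (xs ! i) (xs ! (i + 1)))"

definition connected_graph :: "'a set \<Rightarrow> ('a \<Rightarrow> 'a \<Rightarrow> bool) \<Rightarrow> bool" where
  "connected_graph V adj \<longleftrightarrow> V \<noteq> {} \<and>
     (\<forall>u\<in>V. \<forall>v\<in>V. \<exists>xs. walk V adj xs \<and> hd xs = u \<and> last xs = v)"

definition gdist :: "'a set \<Rightarrow> ('a \<Rightarrow> 'a \<Rightarrow> bool) \<Rightarrow> 'a \<Rightarrow> 'a \<Rightarrow> nat" where
  "gdist V adj u v = (LEAST n. \<exists>xs. walk V adj xs \<and> length xs = n + 1 \<and> hd xs = u \<and> last xs = v)"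

definition diam :: "'a set \<Rightarrow> ('a \<Rightarrow> 'a \<Rightarrow> bool) \<Rightarrow> nat" where
  "diam V adj = Max {gdist V adj u v | u v. u \<in> V \<and> v \<in> V}"

definition arc :: "'a set \<Rightarrow> ('a \<Rightarrow> 'a \<Rightarrow> bool) \<Rightarrow> nat \<Rightarrow> 'a list \<Rightarrow> bool" where
  "arc V adj s xs \<longleftrightarrow> walk V adj xs \<and> length xs = s + 1 \<and>
     (\<forall>j. 1 \<le> j \<and> j + 1 \<le> s \<longrightarrow> xs ! (j - 1) \<noteq> xs ! (j + 1))"

definition geodesic :: "'a set \<Rightarrow> ('a \<Rightarrow> 'a \<Rightarrow> bool) \<Rightarrow> nat \<Rightarrow> 'a list \<Rightarrow> bool" where
  "geodesic V adj s xs \<longleftrightarrow> walk V adj xs \<and> distinct xs \<and> length xs = s + 1 \<and>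
     gdist V adj (hd xs) (last xs) = s"

definition transitive_on_seqs :: "('a \<Rightarrow> 'a) set \<Rightarrow> 'a list set \<Rightarrow> bool" where
  "transitive_on_seqs H X \<longleftrightarrow> (\<forall>xs\<in>X. \<forall>ys\<in>X. \<exists>h\<in>H. map h xs = ys)"

definition geodesic_transitive ::
  "'a set \<Rightarrow> ('a \<Rightarrow> 'a \<Rightarrow> bool) \<Rightarrow> ('a \<Rightarrow> 'a) set \<Rightarrow> nat \<Rightarrow> bool" where
  "geodesic_transitive V adj H s \<longleftrightarrow> (\<exists>xs. geodesic V adj s xs) \<and>
     (\<forall>i\<le>s. transitive_on_seqs H {xs. geodesic V adj i xs})"

definition arc_transitive ::
  "'a set \<Rightarrow> ('a \<Rightarrow> 'a \<Rightarrow> bool) \<Rightarrow> ('a \<Rightarrow> 'a) set \<Rightarrow> nat \<Rightarrow> bool" where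
  "arc_transitive V adj H s \<longleftrightarrow> (\<forall>i\<le>s. transitive_on_seqs H {xs. arc V adj i xs})"

definition is_cycle :: "'a set \<Rightarrow> ('a \<Rightarrow> 'a \<Rightarrow> bool) \<Rightarrow> 'a list \<Rightarrow> bool" where
  "is_cycle V adj xs \<longleftrightarrow> length xs \<ge> 3 \<and> distinct xs \<and> walk V adj xs \<and> adj (last xs) (hd xs)"

definition has_girth :: "'a set \<Rightarrow> ('a \<Rightarrow> 'a \<Rightarrow> bool) \<Rightarrow> nat \<Rightarrow> bool" where
  "has_girth V adj g \<longleftrightarrow> (\<exists>xs. is_cycle V adj xs \<and> length xs = g) \<and>
     (\<forall>xs. is_cycle V adj xs \<longrightarrow> g \<le> length xs)"

definition complete_graph :: "'a set \<Rightarrow> ('a \<Rightarrow> 'a \<Rightarrow> bool) \<Rightarrow> bool" where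
  "complete_graph V adj \<longleftrightarrow> (\<forall>u\<in>V. \<forall>v\<in>V. u \<noteq> v \<longrightarrow> adj u v)"

definition strongly_regular :: "'a set \<Rightarrow> ('a \<Rightarrow> 'a \<Rightarrow> bool) \<Rightarrow> nat \<Rightarrow> nat \<Rightarrow> nat \<Rightarrow> nat \<Rightarrow> bool" where
  "strongly_regular V adj n k a c \<longleftrightarrow> connected_graph V adj \<and> card V = n \<and>
     (\<forall>v\<in>V. card {w\<in>V. adj v w} = k) \<and>
     (\<forall>u\<in>V. \<forall>v\<in>V. adj u v \<longrightarrow> card {w\<in>V. adj u w \<and> adj v w} = a) \<and>
     (\<forall>u\<in>V. \<forall>v\<in>V. u \<noteq> v \<and> \<not> adj u v \<longrightarrow> card {w\<in>V. adj u w \<and> adj v w} = c)"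

definition aut_subgroup :: "'a set \<Rightarrow> ('a \<Rightarrow> 'a \<Rightarrow> bool) \<Rightarrow> ('a \<Rightarrow> 'a) set \<Rightarrow> bool" where
  "aut_subgroup V adj G \<longleftrightarrow> subgroup G (BijGroup V) \<and>
     (\<forall>g\<in>G. \<forall>x\<in>V. \<forall>y\<in>V. adj x y \<longleftrightarrow> adj (g x) (g y))"

definition orbit_of :: "('a \<Rightarrow> 'a) set \<Rightarrow> 'a \<Rightarrow> 'a set" where
  "orbit_of N v = (\<lambda>g. g v) ` N"

definition quot_V :: "'a set \<Rightarrow> ('a \<Rightarrow> 'a) set \<Rightarrow> 'a set set" where
  "quot_V V N = orbit_of N ` V"

definition quot_adj :: "'a set \<Rightarrow> ('a \<Rightarrow> 'a \<Rightarrow> bool) \<Rightarrow> ('a \<Rightarrow> 'a) set \<Rightarrow> 'a set \<Rightarrow> 'a set \<Rightarrow> bool" where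
  "quot_adj V adj N B C \<longleftrightarrow> B \<in> quot_V V N \<and> C \<in> quot_V V N \<and> B \<noteq> C \<and>
     (\<exists>u\<in>B. \<exists>v\<in>C. adj u v)"

text \<open>The action of G/N on the quotient: the coset gN maps the orbit B to g ` B.\<close>
definition quot_action :: "('a \<Rightarrow> 'a) set \<Rightarrow> ('a set \<Rightarrow> 'a set) set" where
  "quot_action G = (\<lambda>g B. g ` B) ` G"

definition is_cover :: "'a set \<Rightarrow> ('a \<Rightarrow> 'a \<Rightarrow> bool) \<Rightarrow> ('a \<Rightarrow> 'a) set \<Rightarrow> bool" where
  "is_cover V adj N \<longleftrightarrow> (\<forall>B C. quot_adj V adj N B C \<longrightarrow>
     (\<forall>v\<in>B. card {u\<in>C. adj v u} = 1))"

end

theory Submission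
  imports Defs
begin

text \<open>
  Since G acts transitively on edges and on 2-geodesics, and girth at least 4 makes every 2-arc a
  2-geodesic, an edge or a 2-arc with both ends in one N-orbit would leave at most two N-orbits
  (in the second case the orbit of a vertex determines the orbits of all its neighbours).
  So adjacent vertices, and vertices with a common neighbour, lie in distinct orbits: \<open>\<Gamma>\<close> is a
  cover of \<open>\<Gamma>\<^sub>N\<close>. Walks and arcs of \<open>\<Gamma>\<^sub>N\<close> lift to \<open>\<Gamma>\<close>, and projection does not increase
  distances, so geodesics of \<open>\<Gamma>\<^sub>N\<close> lift to geodesics of \<open>\<Gamma>\<close> and G/N inherits transitivity on
  i-geodesics (i \<le> 3) and on 2-arcs. Conversely, comparing with a lifted geodesic via G shows that
  an i-geodesic of \<open>\<Gamma>\<close> with i \<le> min 3 (diam \<open>\<Gamma>\<^sub>N\<close>) projects to a geodesic; hence cycles of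
  \<open>\<Gamma>\<^sub>N\<close> of length at most min 3 (diam \<open>\<Gamma>\<^sub>N\<close>) + 1 lift to cycles of \<open>\<Gamma>\<close>. Together with the
  projection of a shortest cycle of \<open>\<Gamma>\<close> this controls the girth of \<open>\<Gamma>\<^sub>N\<close>, and when
  \<open>\<Gamma>\<^sub>N\<close> has diameter 2, transitivity on pairs at each distance makes it strongly regular.
\<close>

section \<open>Walks, distance and geodesics\<close>

lemma walk_iff_successively:
  "walk V adj xs \<longleftrightarrow> xs \<noteq> [] \<and> set xs \<subseteq> V \<and> successively adj xs"
  by (simp add: walk_def successively_conv_nth)

lemma walk_singleton [simp]: "walk V adj [x] \<longleftrightarrow> x \<in> V"
  by (simp add: walk_iff_successively)

lemma walk_Cons_Cons [simp]:
  "walk V adj (x # y # ys) \<longleftrightarrow> x \<in> V \<and> adj x y \<and> walk V adj (y # ys)"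
  by (auto simp: walk_iff_successively)

lemma walk_append_tl:
  assumes "walk V adj xs" "walk V adj ys" "last xs = hd ys"
  shows "walk V adj (xs @ tl ys)"
proof (cases ys)
  case (Cons y ys')
  then have "successively adj (xs @ ys')"
    using assms by (cases ys') (auto simp: walk_iff_successively successively_append_iff)
  then show ?thesis
    using assms Cons by (auto simp: walk_iff_successively)
qed (use assms in \<open>simp add: walk_def\<close>)

lemma walk_take: "walk V adj xs \<Longrightarrow> 0 < k \<Longrightarrow> walk V adj (take k xs)"
  by (auto simp: walk_def dest: in_set_takeD)

lemma walk_drop: "walk V adj xs \<Longrightarrow> k < length xs \<Longrightarrow> walk V adj (drop k xs)"
  by (auto simp: walk_def dest: in_set_dropD)

lemma walk_map:
  assumes "walk V adj xs" "f ` V \<subseteq> W" "\<And>x y. adj x y \<Longrightarrow> adj' (f x) (f y)"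
  shows "walk W adj' (map f xs)"
  using assms by (auto simp: walk_def image_subset_iff)

lemma walk_induct_last:
  assumes "walk V adj xs" "P (hd xs)" "\<And>x y. P x \<Longrightarrow> adj x y \<Longrightarrow> P y"
  shows "P (last xs)"
  using assms
proof (induction xs rule: induct_list012)
  case (3 x y ys)
  then show ?case by simp
qed (simp_all add: walk_def)

lemma connected_graph_induct:
  assumes "connected_graph V adj" "v0 \<in> V" "P v0" "\<And>x y. P x \<Longrightarrow> adj x y \<Longrightarrow> P y" "v \<in> V"
  shows "P v"
  using assms walk_induct_last[of V adj _ P] unfolding connected_graph_def by metis

lemma gdist_le_walk:
  assumes "walk V adj xs"
  shows "gdist V adj (hd xs) (last xs) \<le> length xs - 1"
  unfolding gdist_def
  by (rule Least_le) (use assms in \<open>auto simp: walk_def\<close>)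

lemma obtain_shortest_walk:
  assumes "connected_graph V adj" "u \<in> V" "v \<in> V"
  obtains xs where "walk V adj xs" "length xs = gdist V adj u v + 1" "hd xs = u" "last xs = v"
proof -
  obtain xs where "walk V adj xs" "hd xs = u" "last xs = v"
    using assms unfolding connected_graph_def by blast
  then have "\<exists>n xs. walk V adj xs \<and> length xs = n + 1 \<and> hd xs = u \<and> last xs = v"
    by (intro exI[of _ "length xs - 1"] exI[of _ xs]) (auto simp: walk_def)
  then have "\<exists>xs. walk V adj xs \<and> length xs = gdist V adj u v + 1 \<and> hd xs = u \<and> last xs = v"
    unfolding gdist_def by (rule LeastI_ex)
  then show ?thesis
    using that by blast
qed

lemma gdist_self [simp]: "u \<in> V \<Longrightarrow> gdist V adj u u = 0"
  using gdist_le_walk[of V adj "[u]"] by simp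

lemma gdist_eq_0_iff:
  assumes "connected_graph V adj" "u \<in> V" "v \<in> V"
  shows "gdist V adj u v = 0 \<longleftrightarrow> u = v"
proof
  assume "gdist V adj u v = 0"
  moreover obtain xs
    where "walk V adj xs" "length xs = gdist V adj u v + 1" "hd xs = u" "last xs = v"
    using obtain_shortest_walk[OF assms] .
  ultimately show "u = v"
    by (auto simp: length_Suc_conv)
qed (use assms in simp)

lemma adj_if_gdist_eq_1:
  assumes "connected_graph V adj" "u \<in> V" "v \<in> V" "gdist V adj u v = 1"
  shows "adj u v"
  by (rule obtain_shortest_walk[OF assms(1-3)]) (use assms(4) in \<open>auto simp: length_Suc_conv\<close>)

lemma gdist_eq_1_if_adj:
  assumes "simple_graph V adj" "connected_graph V adj" "adj u v"
  shows "gdist V adj u v = 1"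
proof -
  have uv: "u \<in> V" "v \<in> V" "u \<noteq> v"
    using assms unfolding simple_graph_def by metis+
  have "gdist V adj u v \<le> 1"
    using gdist_le_walk[of V adj "[u,v]"] uv assms by simp
  moreover have "gdist V adj u v \<noteq> 0"
    using gdist_eq_0_iff[OF assms(2) uv(1,2)] uv by blast
  ultimately show ?thesis by simp
qed

lemma gdist_triangle:
  assumes "connected_graph V adj" "u \<in> V" "v \<in> V" "w \<in> V"
  shows "gdist V adj u w \<le> gdist V adj u v + gdist V adj v w"
proof -
  obtain xs where xs: "walk V adj xs" "length xs = gdist V adj u v + 1" "hd xs = u" "last xs = v"
    using obtain_shortest_walk[OF assms(1-3)] .
  obtain ys where ys: "walk V adj ys" "length ys = gdist V adj v w + 1" "hd ys = v" "last ys = w"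
    using obtain_shortest_walk[OF assms(1,3,4)] .
  have "last (xs @ tl ys) = w"
    using xs ys by (cases ys) (auto simp: walk_def)
  moreover have "hd (xs @ tl ys) = u"
    using xs by (cases xs) (auto simp: walk_def)
  ultimately show ?thesis
    using gdist_le_walk[OF walk_append_tl[OF xs(1) ys(1)]] xs ys by simp
qed

lemma gdist_map_le:
  assumes "connected_graph V adj" "f ` V \<subseteq> V" "\<And>x y. adj x y \<Longrightarrow> adj (f x) (f y)"
    and "u \<in> V" "v \<in> V"
  shows "gdist V adj (f u) (f v) \<le> gdist V adj u v"
proof -
  obtain xs where xs: "walk V adj xs" "length xs = gdist V adj u v + 1" "hd xs = u" "last xs = v"
    using obtain_shortest_walk[OF assms(1,4,5)] .
  have "xs \<noteq> []"
    using xs(1) by (simp add: walk_def)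
  then show ?thesis
    using gdist_le_walk[OF walk_map[of V adj xs f V adj, OF xs(1) assms(2,3)]] xs(2-4)
    by (simp add: hd_map last_map)
qed

lemma distinct_if_shortest_walk:
  assumes "walk V adj xs" "length xs = gdist V adj (hd xs) (last xs) + 1"
  shows "distinct xs"
proof (rule ccontr)
  assume "\<not> distinct xs"
  then obtain a x b c where xs: "xs = a @ [x] @ b @ [x] @ c"
    using not_distinct_decomp by blast
  have "successively adj ((x # b) @ (x # c))"
    using assms(1) unfolding xs walk_iff_successively by (simp add: successively_append_iff)
  then have "successively adj (x # c)"
    by (simp only: successively_append_iff)
  then have "walk V adj (a @ [x] @ c)"
    using assms(1) unfolding xs walk_iff_successively
    by (auto simp: successively_append_iff)
  then have "gdist V adj (hd xs) (last xs) \<le> length (a @ [x] @ c) - 1"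
    using gdist_le_walk[of V adj "a @ [x] @ c"] xs by (cases a; cases c) auto
  then show False
    using assms(2) xs by simp
qed

lemma geodesic_between:
  assumes "connected_graph V adj" "u \<in> V" "v \<in> V"
  shows "\<exists>xs. geodesic V adj (gdist V adj u v) xs \<and> hd xs = u \<and> last xs = v"
proof -
  obtain xs where xs: "walk V adj xs" "length xs = gdist V adj u v + 1" "hd xs = u" "last xs = v"
    using obtain_shortest_walk[OF assms] .
  then have "distinct xs"
    using distinct_if_shortest_walk[OF xs(1)] by simp
  then show ?thesis
    using xs unfolding geodesic_def by auto
qed

lemma geodesic_singleton: "u \<in> V \<Longrightarrow> geodesic V adj 0 [u]"
  unfolding geodesic_def by simp

lemma geodesic_edge:
  assumes "simple_graph V adj" "connected_graph V adj" "adj u v"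
  shows "geodesic V adj 1 [u, v]"
  using assms gdist_eq_1_if_adj[OF assms] unfolding simple_graph_def geodesic_def by auto

lemma geodesic_take:
  assumes "connected_graph V adj" "geodesic V adj s xs" "k \<le> s"
  shows "geodesic V adj k (take (k + 1) xs)"
proof -
  have xs: "walk V adj xs" "distinct xs" "length xs = s + 1" "gdist V adj (hd xs) (last xs) = s"
    using assms(2) unfolding geodesic_def by auto
  have "take (k + 1) xs \<noteq> []"
    using xs(3) by (cases xs) auto
  then have take: "walk V adj (take (k + 1) xs)" "hd (take (k + 1) xs) = hd xs"
    "last (take (k + 1) xs) = xs ! k"
    using walk_take[OF xs(1)] xs(3) assms(3)
    by (auto simp: hd_conv_nth last_conv_nth min_def)
  have drop: "walk V adj (drop k xs)" "hd (drop k xs) = xs ! k" "last (drop k xs) = last xs"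
    using walk_drop[OF xs(1)] xs(3) assms(3) by (auto simp: hd_drop_conv_nth)
  have in_V: "hd xs \<in> V" "xs ! k \<in> V" "last xs \<in> V"
    using xs(1,3) assms(3) by (auto simp: walk_def)
  have "gdist V adj (hd xs) (xs ! k) \<le> k"
    using gdist_le_walk[OF take(1)] take(2,3) xs(3) assms(3) by simp
  moreover have "gdist V adj (xs ! k) (last xs) \<le> s - k"
    using gdist_le_walk[OF drop(1)] drop(2,3) xs(3) by simp
  ultimately have "gdist V adj (hd xs) (xs ! k) = k"
    using gdist_triangle[OF assms(1) in_V] xs(4) assms(3) by linarith
  then show ?thesis
    using take xs(2,3) assms(3) unfolding geodesic_def by simp
qed

lemma finite_gdist_values:
  "finite V \<Longrightarrow> finite {gdist V adj u v | u v. u \<in> V \<and> v \<in> V}"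
  using finite_image_set2[of "\<lambda>u. u \<in> V" "\<lambda>v. v \<in> V" "gdist V adj"] by simp

lemma gdist_le_diam:
  "finite V \<Longrightarrow> u \<in> V \<Longrightarrow> v \<in> V \<Longrightarrow> gdist V adj u v \<le> diam V adj"
  unfolding diam_def by (rule Max_ge) (auto intro: finite_gdist_values)

lemma diam_attained:
  assumes "finite V" "V \<noteq> {}"
  obtains u v where "u \<in> V" "v \<in> V" "gdist V adj u v = diam V adj"
proof -
  have "diam V adj \<in> {gdist V adj u v | u v. u \<in> V \<and> v \<in> V}"
    unfolding diam_def using assms by (intro Max_in finite_gdist_values) auto
  then obtain u v where "u \<in> V" "v \<in> V" "diam V adj = gdist V adj u v"
    by blast
  then show ?thesis
    using that by simp
qed

lemma geodesic_exists_if_le_diam: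
  assumes "finite V" "connected_graph V adj" "k \<le> diam V adj"
  shows "\<exists>xs. geodesic V adj k xs"
proof -
  obtain u v where uv: "u \<in> V" "v \<in> V" "gdist V adj u v = diam V adj"
    using diam_attained[OF assms(1)] assms(2) unfolding connected_graph_def by blast
  then obtain xs where "geodesic V adj (diam V adj) xs"
    using geodesic_between[OF assms(2)] by metis
  then show ?thesis
    using geodesic_take[OF assms(2)] assms(3) by blast
qed

lemma diam_ge_2_if_not_complete:
  assumes "simple_graph V adj" "connected_graph V adj" "\<not> complete_graph V adj"
  shows "2 \<le> diam V adj"
proof -
  obtain u v where uv: "u \<in> V" "v \<in> V" "u \<noteq> v" "\<not> adj u v"
    using assms(3) unfolding complete_graph_def by blast
  have "gdist V adj u v \<noteq> 0" "gdist V adj u v \<noteq> 1"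
    using gdist_eq_0_iff[OF assms(2) uv(1,2)] adj_if_gdist_eq_1[OF assms(2) uv(1,2)] uv(3,4)
    by auto
  then show ?thesis
    using gdist_le_diam[OF _ uv(1,2), of adj] assms(1) unfolding simple_graph_def by linarith
qed

section \<open>Triangle-free graphs, girth and strong regularity\<close>

definition triangle_free :: "('a \<Rightarrow> 'a \<Rightarrow> bool) \<Rightarrow> bool" where
  "triangle_free adj \<longleftrightarrow> (\<forall>x y z. adj x y \<longrightarrow> adj y z \<longrightarrow> \<not> adj z x)"

lemma geodesic_2_path_if_triangle_free:
  assumes "simple_graph V adj" "connected_graph V adj" "triangle_free adj"
    and "adj u v" "adj v w" "u \<noteq> w"
  shows "geodesic V adj 2 [u, v, w]"
proof -
  have V: "u \<in> V" "v \<in> V" "w \<in> V" "u \<noteq> v" "v \<noteq> w"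
    using assms(1,4,5) unfolding simple_graph_def by metis+
  have "gdist V adj u w \<le> 2"
    using gdist_le_walk[of V adj "[u, v, w]"] assms(4,5) V by simp
  moreover have "gdist V adj u w \<noteq> 0" "gdist V adj u w \<noteq> 1"
    using gdist_eq_0_iff[OF assms(2) V(1,3)] adj_if_gdist_eq_1[OF assms(2) V(1,3)]
      assms(1,3-6) unfolding simple_graph_def triangle_free_def by blast+
  ultimately show ?thesis
    using assms(4-6) V unfolding geodesic_def by simp
qed

lemma geodesic_if_arc_triangle_free:
  assumes "simple_graph V adj" "connected_graph V adj" "triangle_free adj"
    and "arc V adj i xs" "i \<le> 2"
  shows "geodesic V adj i xs"
proof -
  have xs: "walk V adj xs" "length xs = i + 1"
    using assms(4) unfolding arc_def by auto
  consider "i = 0" | "i = 1" | "i = 2"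
    using assms(5) by linarith
  then show ?thesis
  proof cases
    case 1
    then obtain u where "xs = [u]"
      using xs(2) by (auto simp: length_Suc_conv)
    then show ?thesis
      using xs 1 geodesic_singleton by simp
  next
    case 2
    then obtain u v where "xs = [u, v]"
      using xs(2) by (auto simp: length_Suc_conv)
    then show ?thesis
      using xs 2 geodesic_edge[OF assms(1,2)] by simp
  next
    case 3
    then obtain u v w where uvw: "xs = [u, v, w]"
      using xs(2) by (auto simp: length_Suc_conv numeral_2_eq_2)
    have "\<forall>j. 1 \<le> j \<and> j + 1 \<le> i \<longrightarrow> xs ! (j - 1) \<noteq> xs ! (j + 1)"
      using assms(4) unfolding arc_def by blast
    then have "u \<noteq> w"
      using 3 uvw by (auto dest: spec[of _ 1])
    moreover have "adj u v" "adj v w"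
      using xs(1) uvw by auto
    ultimately have "geodesic V adj 2 [u, v, w]"
      using geodesic_2_path_if_triangle_free[OF assms(1-3)] by blast
    then show ?thesis
      using 3 uvw by simp
  qed
qed

lemma girth_le_cycle_length: "has_girth V adj g \<Longrightarrow> is_cycle V adj xs \<Longrightarrow> g \<le> length xs"
  unfolding has_girth_def by blast

lemma has_girth_unique: "has_girth V adj g \<Longrightarrow> has_girth V adj g' \<Longrightarrow> g = g'"
  unfolding has_girth_def by (metis le_antisym)

lemma has_girth_4_or_5_if_cycles_ge_4:
  assumes "is_cycle V adj xs" "length xs = 4 \<or> length xs = 5"
    and "\<And>ys. is_cycle V adj ys \<Longrightarrow> 4 \<le> length ys"
  shows "has_girth V adj 4 \<or> has_girth V adj 5"
proof (cases "\<exists>ys. is_cycle V adj ys \<and> length ys = 4")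
  case True
  then show ?thesis
    using assms(3) unfolding has_girth_def by blast
next
  case False
  then have "5 \<le> length ys" if "is_cycle V adj ys" for ys
    using assms(3)[OF that] that by fastforce
  then show ?thesis
    using assms(1,2) False unfolding has_girth_def by blast
qed

definition inj_endomorphisms :: "'a set \<Rightarrow> ('a \<Rightarrow> 'a \<Rightarrow> bool) \<Rightarrow> ('a \<Rightarrow> 'a) set \<Rightarrow> bool" where
  "inj_endomorphisms V adj H \<longleftrightarrow>
     (\<forall>h\<in>H. inj_on h V \<and> h ` V \<subseteq> V \<and> (\<forall>x y. adj x y \<longrightarrow> adj (h x) (h y)))"

lemma card_common_neighbours_le:
  assumes "finite V" "inj_on h V" "h ` V \<subseteq> V" "\<And>x y. adj x y \<Longrightarrow> adj (h x) (h y)"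
  shows "card {w \<in> V. adj x w \<and> adj y w} \<le> card {w \<in> V. adj (h x) w \<and> adj (h y) w}"
  by (rule card_inj_on_le[of h]) (use assms in \<open>auto simp: inj_on_def\<close>)

lemma card_common_neighbours_constant:
  assumes "simple_graph V adj" "connected_graph V adj"
    and "transitive_on_seqs H {xs. geodesic V adj m xs}"
    and "inj_endomorphisms V adj H"
  shows "\<exists>c. \<forall>x\<in>V. \<forall>y\<in>V. gdist V adj x y = m \<longrightarrow> card {w \<in> V. adj x w \<and> adj y w} = c"
proof -
  have le: "card {w \<in> V. adj x w \<and> adj y w} \<le> card {w \<in> V. adj x' w \<and> adj y' w}"
    if xy: "x \<in> V" "y \<in> V" "x' \<in> V" "y' \<in> V" "gdist V adj x y = m" "gdist V adj x' y' = m"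
    for x y x' y'
  proof -
    obtain xs where xs: "geodesic V adj m xs" "hd xs = x" "last xs = y"
      using geodesic_between[OF assms(2) xy(1,2)] xy(5) by blast
    obtain ys where ys: "geodesic V adj m ys" "hd ys = x'" "last ys = y'"
      using geodesic_between[OF assms(2) xy(3,4)] xy(6) by blast
    obtain h where h: "h \<in> H" "map h xs = ys"
      using assms(3) xs(1) ys(1) unfolding transitive_on_seqs_def by blast
    have "xs \<noteq> []"
      using xs(1) unfolding geodesic_def walk_def by blast
    then have "h x = x'" "h y = y'"
      using xs(2,3) ys(2,3) h(2) by (auto simp: hd_map last_map)
    then show ?thesis
      using card_common_neighbours_le[of V h adj x y] assms(1,4) h(1)
      unfolding simple_graph_def inj_endomorphisms_def by auto
  qed
  show ?thesis
  proof (cases "\<exists>x\<in>V. \<exists>y\<in>V. gdist V adj x y = m")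
    case True
    then obtain x0 y0 where x0y0: "x0 \<in> V" "y0 \<in> V" "gdist V adj x0 y0 = m"
      by blast
    show ?thesis
    proof (intro exI ballI impI)
      fix x y
      assume "x \<in> V" "y \<in> V" "gdist V adj x y = m"
      then show "card {w \<in> V. adj x w \<and> adj y w} = card {w \<in> V. adj x0 w \<and> adj y0 w}"
        using le[of x y x0 y0] le[of x0 y0 x y] x0y0 by linarith
    qed
  qed blast
qed

lemma strongly_regular_if_geodesic_transitive:
  assumes "simple_graph V adj" "connected_graph V adj" "diam V adj = 2"
    and "geodesic_transitive V adj H 2"
    and "inj_endomorphisms V adj H"
  shows "\<exists>n k a c. strongly_regular V adj n k a c"
proof -
  have const: "\<exists>c. \<forall>x\<in>V. \<forall>y\<in>V. gdist V adj x y = m \<longrightarrow> card {w \<in> V. adj x w \<and> adj y w} = c"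
    if "m \<le> 2" for m
    using card_common_neighbours_constant[OF assms(1,2) _ assms(5)] that assms(4)
    unfolding geodesic_transitive_def by blast
  obtain k where k: "\<forall>x\<in>V. \<forall>y\<in>V. gdist V adj x y = 0 \<longrightarrow> card {w \<in> V. adj x w \<and> adj y w} = k"
    using const[of 0] by blast
  obtain a where a: "\<forall>x\<in>V. \<forall>y\<in>V. gdist V adj x y = 1 \<longrightarrow> card {w \<in> V. adj x w \<and> adj y w} = a"
    using const[of 1] by auto
  obtain c where c: "\<forall>x\<in>V. \<forall>y\<in>V. gdist V adj x y = 2 \<longrightarrow> card {w \<in> V. adj x w \<and> adj y w} = c"
    using const[of 2] by blast
  have "card {w \<in> V. adj v w} = k" if "v \<in> V" for v
    using k that by fastforce
  moreover have "gdist V adj x y = 2" if "x \<in> V" "y \<in> V" "x \<noteq> y" "\<not> adj x y" for x y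
    using gdist_eq_0_iff[OF assms(2) that(1,2)] adj_if_gdist_eq_1[OF assms(2) that(1,2)]
      gdist_le_diam[of V x y adj] assms(1,3) that unfolding simple_graph_def by fastforce
  ultimately have "strongly_regular V adj (card V) k a c"
    unfolding strongly_regular_def
    using assms(2) a c gdist_eq_1_if_adj[OF assms(1,2)]
    by (simp add: simple_graph_def)
  then show ?thesis
    by blast
qed

section \<open>Orbits of a normal subgroup of an automorphism group\<close>

locale normal_quotient =
  fixes V :: "'a set" and adj :: "'a \<Rightarrow> 'a \<Rightarrow> bool" and G N :: "('a \<Rightarrow> 'a) set"
  assumes simple: "simple_graph V adj"
    and connected: "connected_graph V adj"
    and aut: "aut_subgroup V adj G"
    and normal: "N \<lhd> (BijGroup V)\<lparr>carrier := G\<rparr>"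
begin

abbreviation "AutG \<equiv> (BijGroup V)\<lparr>carrier := G\<rparr>"
abbreviation "VN \<equiv> quot_V V N"
abbreviation "adjN \<equiv> quot_adj V adj N"

lemma finite_V: "finite V"
  using simple by (simp add: simple_graph_def)

lemma adj_in_V: "adj x y \<Longrightarrow> x \<in> V \<and> y \<in> V"
  using simple by (simp add: simple_graph_def)

lemma adj_sym: "adj x y \<Longrightarrow> adj y x"
  using simple by (simp add: simple_graph_def)

lemma adj_irrefl: "\<not> adj x x"
  using simple by (simp add: simple_graph_def)

lemma G_subgroup: "subgroup G (BijGroup V)"
  using aut by (simp add: aut_subgroup_def)

lemma group_AutG: "group AutG"
  using subgroup.subgroup_is_group[OF G_subgroup group_BijGroup] .

lemma N_subgroup: "subgroup N AutG"
  using normal by (rule normal_imp_subgroup)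

lemma N_subset_G: "N \<subseteq> G"
  using subgroup.subset[OF N_subgroup] by simp

lemma G_bij_betw: "g \<in> G \<Longrightarrow> bij_betw g V V"
  using subgroup.subset[OF G_subgroup] by (auto simp: BijGroup_def Bij_def)

lemma G_in_V: "g \<in> G \<Longrightarrow> x \<in> V \<Longrightarrow> g x \<in> V"
  using G_bij_betw bij_betwE by blast

lemma G_adj: "g \<in> G \<Longrightarrow> adj x y \<Longrightarrow> adj (g x) (g y)"
  using aut adj_in_V unfolding aut_subgroup_def by blast

lemma G_mult_apply: "f \<in> G \<Longrightarrow> g \<in> G \<Longrightarrow> x \<in> V \<Longrightarrow> (f \<otimes>\<^bsub>BijGroup V\<^esub> g) x = f (g x)"
  using subgroup.subset[OF G_subgroup] by (auto simp: BijGroup_def compose_def)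

lemma G_mult_closed: "f \<in> G \<Longrightarrow> g \<in> G \<Longrightarrow> f \<otimes>\<^bsub>BijGroup V\<^esub> g \<in> G"
  using subgroup.m_closed[OF G_subgroup] .

lemma AutG_inv_apply:
  assumes "g \<in> G" "x \<in> V"
  shows "(inv\<^bsub>AutG\<^esub> g) (g x) = x" "g ((inv\<^bsub>AutG\<^esub> g) x) = x"
proof -
  have "g \<in> Bij V"
    using subgroup.subset[OF G_subgroup] assms(1) by (auto simp: BijGroup_def)
  then have "inv\<^bsub>AutG\<^esub> g = (\<lambda>x \<in> V. inv_into V g x)"
    using group.m_inv_consistent[OF group_BijGroup G_subgroup assms(1)] inv_BijGroup by metis
  then show "(inv\<^bsub>AutG\<^esub> g) (g x) = x" "g ((inv\<^bsub>AutG\<^esub> g) x) = x"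
    using G_bij_betw[OF assms(1)] assms G_in_V
    by (auto simp: bij_betw_def inv_into_f_f f_inv_into_f)
qed

lemma orbit_of_self:
  assumes "v \<in> V"
  shows "v \<in> orbit_of N v"
proof -
  have "(\<lambda>x \<in> V. x) \<in> N"
    using subgroup.one_closed[OF N_subgroup] by (simp add: BijGroup_def)
  then show ?thesis
    unfolding orbit_of_def by (rule image_eqI[rotated]) (simp add: assms)
qed

lemma orbit_of_subset: "v \<in> V \<Longrightarrow> orbit_of N v \<subseteq> V"
  unfolding orbit_of_def using N_subset_G G_in_V by blast

lemma orbit_of_eq:
  assumes "v \<in> V" "u \<in> orbit_of N v"
  shows "orbit_of N u = orbit_of N v"
proof -
  obtain n where n: "n \<in> N" "u = n v"
    using assms(2) unfolding orbit_of_def by blast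
  have n_inv: "inv\<^bsub>AutG\<^esub> n \<in> N"
    using subgroup.m_inv_closed[OF N_subgroup n(1)] .
  have "k u \<in> orbit_of N v" if "k \<in> N" for k
  proof -
    have "k u = (k \<otimes>\<^bsub>AutG\<^esub> n) v"
      using G_mult_apply[of k n v] N_subset_G that n assms(1) by (simp add: subset_iff)
    then show ?thesis
      using subgroup.m_closed[OF N_subgroup that n(1)] unfolding orbit_of_def by blast
  qed
  moreover have "k v \<in> orbit_of N u" if "k \<in> N" for k
  proof -
    have "k v = (k \<otimes>\<^bsub>AutG\<^esub> inv\<^bsub>AutG\<^esub> n) u"
      using G_mult_apply[of k "inv\<^bsub>AutG\<^esub> n" u] AutG_inv_apply(1)[of n v]
        N_subset_G that n n_inv assms(1) G_in_V by (simp add: subset_iff)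
    then show ?thesis
      using subgroup.m_closed[OF N_subgroup that n_inv] unfolding orbit_of_def by blast
  qed
  ultimately show ?thesis
    unfolding orbit_of_def by blast
qed

lemma orbit_of_eq_iff: "u \<in> V \<Longrightarrow> v \<in> V \<Longrightarrow> orbit_of N u = orbit_of N v \<longleftrightarrow> u \<in> orbit_of N v"
  using orbit_of_eq orbit_of_self by metis

lemma orbit_of_apply: "n \<in> N \<Longrightarrow> v \<in> V \<Longrightarrow> orbit_of N (n v) = orbit_of N v"
  using orbit_of_eq unfolding orbit_of_def by blast

lemma image_orbit_of:
  assumes "g \<in> G" "v \<in> V"
  shows "g ` orbit_of N v = orbit_of N (g v)"
proof -
  let ?g' = "inv\<^bsub>AutG\<^esub> g"
  have g': "?g' \<in> G"
    using group.inv_closed[OF group_AutG] assms(1) by simp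
  have gv: "g v \<in> V" "?g' v \<in> V"
    using G_in_V assms g' by auto
  have "g (n v) \<in> orbit_of N (g v)" if n: "n \<in> N" for n
  proof -
    have gn: "g \<otimes>\<^bsub>BijGroup V\<^esub> n \<in> G"
      using G_mult_closed assms(1) n N_subset_G by blast
    have "g \<otimes>\<^bsub>BijGroup V\<^esub> n \<otimes>\<^bsub>BijGroup V\<^esub> ?g' \<in> N"
      using normal.inv_op_closed2[OF normal] assms(1) n by simp
    moreover have "(g \<otimes>\<^bsub>BijGroup V\<^esub> n \<otimes>\<^bsub>BijGroup V\<^esub> ?g') (g v) = g (n v)"
      using G_mult_apply[OF gn g' gv(1)] AutG_inv_apply(1)[OF assms]
        G_mult_apply[OF assms(1) subsetD[OF N_subset_G n] assms(2)] by simp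
    ultimately show ?thesis
      unfolding orbit_of_def by (metis image_eqI)
  qed
  moreover have "n (g v) \<in> g ` orbit_of N v" if n: "n \<in> N" for n
  proof -
    have g'n: "?g' \<otimes>\<^bsub>BijGroup V\<^esub> n \<in> G"
      using G_mult_closed g' n N_subset_G by blast
    have "?g' \<otimes>\<^bsub>BijGroup V\<^esub> n \<otimes>\<^bsub>BijGroup V\<^esub> g \<in> N"
      using normal.inv_op_closed1[OF normal] assms(1) n by simp
    moreover have "g ((?g' \<otimes>\<^bsub>BijGroup V\<^esub> n \<otimes>\<^bsub>BijGroup V\<^esub> g) v) = n (g v)"
      using G_mult_apply[OF g'n assms] G_mult_apply[OF g' subsetD[OF N_subset_G n] gv(1)]
        AutG_inv_apply(2)[OF assms(1) G_in_V[OF subsetD[OF N_subset_G n] gv(1)]] by simp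
    ultimately show ?thesis
      unfolding orbit_of_def by (metis image_eqI)
  qed
  ultimately show ?thesis
    unfolding orbit_of_def by blast
qed

lemma orbit_of_in_quot_V: "v \<in> V \<Longrightarrow> orbit_of N v \<in> VN"
  unfolding quot_V_def by blast

lemma mem_quot_V: "B \<in> VN \<Longrightarrow> v \<in> B \<Longrightarrow> v \<in> V \<and> orbit_of N v = B"
  unfolding quot_V_def using orbit_of_eq orbit_of_subset by blast

lemma quot_V_nonempty: "B \<in> VN \<Longrightarrow> B \<noteq> {}"
  unfolding quot_V_def using orbit_of_self by blast

lemma finite_quot_V: "finite VN"
  unfolding quot_V_def using finite_V by simp

lemma quot_adj_in_quot_V: "adjN B C \<Longrightarrow> B \<in> VN \<and> C \<in> VN"
  unfolding quot_adj_def by blast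

lemma simple_quot: "simple_graph VN adjN"
  unfolding simple_graph_def quot_adj_def using finite_quot_V adj_sym by blast

lemma quot_adj_lift:
  assumes "adjN B C" "v \<in> B"
  shows "\<exists>u\<in>C. adj v u"
proof -
  obtain b c where bc: "b \<in> B" "c \<in> C" "adj b c" "B \<in> VN" "C \<in> VN"
    using assms(1) unfolding quot_adj_def by blast
  have "v \<in> orbit_of N b"
    using mem_quot_V bc(1,4) assms(2) by blast
  then obtain n where n: "n \<in> N" "v = n b"
    unfolding orbit_of_def by blast
  have "n c \<in> C"
    using mem_quot_V[OF bc(5,2)] n(1) unfolding orbit_of_def by blast
  moreover have "adj v (n c)"
    using G_adj[OF _ bc(3)] n N_subset_G by blast
  ultimately show ?thesis
    by blast
qed

lemma walk_lift_from:
  "walk VN adjN Bs \<Longrightarrow> v \<in> hd Bs \<Longrightarrow> \<exists>xs. walk V adj xs \<and> map (orbit_of N) xs = Bs \<and> hd xs = v"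
proof (induction Bs arbitrary: v rule: induct_list012)
  case (2 B)
  then show ?case
    using mem_quot_V by (intro exI[of _ "[v]"]) auto
next
  case (3 B C Bs)
  obtain u where u: "u \<in> C" "adj v u"
    using quot_adj_lift[of B C v] 3(3,4) by auto
  then obtain xs where xs: "walk V adj xs" "map (orbit_of N) xs = C # Bs" "hd xs = u"
    using 3(2)[of u] 3(3) by auto
  have "v \<in> V" "orbit_of N v = B"
    using mem_quot_V 3(3,4) quot_adj_in_quot_V by auto
  then show ?case
    using xs u by (intro exI[of _ "v # xs"]) (cases xs; auto)
qed (simp add: walk_def)

lemma walk_lift:
  assumes "walk VN adjN Bs"
  obtains xs where "walk V adj xs" "map (orbit_of N) xs = Bs"
proof -
  have "hd Bs \<in> VN"
    using assms unfolding walk_def by (cases Bs) auto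
  then obtain v where "v \<in> hd Bs"
    using quot_V_nonempty by blast
  then show ?thesis
    using walk_lift_from[OF assms] that by blast
qed

lemma arc_lift:
  assumes "arc VN adjN i Bs"
  obtains xs where "arc V adj i xs" "map (orbit_of N) xs = Bs"
proof -
  obtain xs where xs: "walk V adj xs" "map (orbit_of N) xs = Bs"
    using walk_lift assms unfolding arc_def by blast
  have len: "length xs = i + 1"
    using assms xs(2) unfolding arc_def by auto
  have "xs ! (j - 1) \<noteq> xs ! (j + 1)" if "1 \<le> j" "j + 1 \<le> i" for j
    using assms xs(2) len that unfolding arc_def by auto
  then show ?thesis
    using that xs len unfolding arc_def by blast
qed

lemma image_in_quot_V: "g \<in> G \<Longrightarrow> B \<in> VN \<Longrightarrow> g ` B \<in> VN"
  unfolding quot_V_def using image_orbit_of G_in_V by blast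

lemma inj_on_image_quot_V: "g \<in> G \<Longrightarrow> inj_on (image g) VN"
  using G_bij_betw mem_quot_V quot_V_nonempty unfolding inj_on_def
  by (metis bij_betw_def inj_on_image_eq_iff subsetI)

lemma quot_adj_image:
  assumes "g \<in> G" "adjN B C"
  shows "adjN (g ` B) (g ` C)"
proof -
  obtain u v where uv: "u \<in> B" "v \<in> C" "adj u v"
    using assms(2) unfolding quot_adj_def by blast
  have BC: "B \<in> VN" "C \<in> VN" "B \<noteq> C"
    using assms(2) unfolding quot_adj_def by auto
  then have "g ` B \<noteq> g ` C"
    using inj_on_image_quot_V[OF assms(1)] by (auto dest: inj_onD)
  moreover have "g u \<in> g ` B" "g v \<in> g ` C"
    using uv by simp_all
  ultimately show ?thesis
    unfolding quot_adj_def
    using image_in_quot_V[OF assms(1) BC(1)] image_in_quot_V[OF assms(1) BC(2)]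
      G_adj[OF assms(1) uv(3)]
    by blast
qed

lemma inj_endomorphisms_quot_action: "inj_endomorphisms VN adjN (quot_action G)"
  unfolding inj_endomorphisms_def quot_action_def
  using inj_on_image_quot_V image_in_quot_V quot_adj_image by blast

lemma map_image_orbit_of:
  "g \<in> G \<Longrightarrow> set xs \<subseteq> V \<Longrightarrow> map (image g) (map (orbit_of N) xs) = map (orbit_of N) (map g xs)"
  using image_orbit_of by (simp add: subset_iff)

end

section \<open>Normal quotients of 3-geodesic-transitive graphs of girth 4 or 5\<close>

locale geodesic_transitive_quotient = normal_quotient +
  assumes geodesic_trans: "geodesic_transitive V adj G 3"
    and girth: "has_girth V adj 4 \<or> has_girth V adj 5"
    and three_orbits: "3 \<le> card (quot_V V N)"
begin

lemma G_transitive_geodesics: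
  "i \<le> 3 \<Longrightarrow> geodesic V adj i xs \<Longrightarrow> geodesic V adj i ys \<Longrightarrow> \<exists>g\<in>G. map g xs = ys"
  using geodesic_trans unfolding geodesic_transitive_def transitive_on_seqs_def by blast

lemma cycle_length_ge_4: "is_cycle V adj xs \<Longrightarrow> 4 \<le> length xs"
  using girth girth_le_cycle_length by fastforce

lemma triangle_free_adj: "triangle_free adj"
  unfolding triangle_free_def
proof (intro allI impI notI)
  fix x y z
  assume "adj x y" "adj y z" "adj z x"
  then have "is_cycle V adj [x, y, z]"
    using adj_in_V adj_irrefl unfolding is_cycle_def by fastforce
  then show False
    using cycle_length_ge_4 by fastforce
qed

lemma geodesic_2_path: "adj u v \<Longrightarrow> adj v w \<Longrightarrow> u \<noteq> w \<Longrightarrow> geodesic V adj 2 [u, v, w]"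
  using geodesic_2_path_if_triangle_free[OF simple connected triangle_free_adj] .

lemma geodesic_if_arc: "arc V adj i xs \<Longrightarrow> i \<le> 2 \<Longrightarrow> geodesic V adj i xs"
  using geodesic_if_arc_triangle_free[OF simple connected triangle_free_adj] .

lemma quot_V_not_subset_pair: "\<not> VN \<subseteq> {B, C}"
proof
  assume "VN \<subseteq> {B, C}"
  then have "card VN \<le> card {B, C}"
    by (simp add: card_mono)
  also have "\<dots> \<le> 2"
    by (simp add: card_insert_le_m1)
  finally show False
    using three_orbits by simp
qed

lemma orbit_of_neq_if_adj:
  assumes "adj u w"
  shows "orbit_of N u \<noteq> orbit_of N w"
proof
  assume eq: "orbit_of N u = orbit_of N w"
  have edge: "orbit_of N x = orbit_of N y" if xy: "adj x y" for x y
  proof -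
    obtain g where g: "g \<in> G" "map g [u, w] = [x, y]"
      using G_transitive_geodesics[of 1 "[u, w]" "[x, y]"]
        geodesic_edge[OF simple connected assms] geodesic_edge[OF simple connected xy] by auto
    then have "g u = x" "g w = y"
      by auto
    then have "orbit_of N x = g ` orbit_of N u" "orbit_of N y = g ` orbit_of N w"
      using image_orbit_of[OF g(1)] adj_in_V[OF assms] by auto
    then show ?thesis
      using eq by simp
  qed
  have "orbit_of N v = orbit_of N u" if "v \<in> V" for v
  proof (rule connected_graph_induct[where P = "\<lambda>x. orbit_of N x = orbit_of N u"])
    show "u \<in> V"
      using adj_in_V assms by blast
    show "orbit_of N y = orbit_of N u" if "orbit_of N x = orbit_of N u" "adj x y" for x y
      using edge[OF that(2)] that(1) by simp
  qed (use connected that in simp_all)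
  then have "VN \<subseteq> {orbit_of N u}"
    unfolding quot_V_def by blast
  then show False
    using quot_V_not_subset_pair[of "orbit_of N u" "orbit_of N u"] by simp
qed

lemma orbit_of_neq_if_common_neighbour:
  assumes "adj v u" "adj v w" "u \<noteq> w"
  shows "orbit_of N u \<noteq> orbit_of N w"
proof
  assume eq: "orbit_of N u = orbit_of N w"
  have uvw: "u \<in> V" "v \<in> V" "w \<in> V"
    using adj_in_V assms by auto
  have far: "orbit_of N x = orbit_of N z" if xyz: "adj y x" "adj y z" "x \<noteq> z" for x y z
  proof -
    obtain g where g: "g \<in> G" "map g [u, v, w] = [x, y, z]"
      using G_transitive_geodesics[of 2 "[u, v, w]" "[x, y, z]"]
        geodesic_2_path[OF adj_sym[OF assms(1)] assms(2,3)]
        geodesic_2_path[OF adj_sym[OF xyz(1)] xyz(2,3)]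
      by auto
    then have "g u = x" "g w = z"
      by auto
    then have "orbit_of N x = g ` orbit_of N u" "orbit_of N z = g ` orbit_of N w"
      using image_orbit_of[OF g(1)] uvw by auto
    then show ?thesis
      using eq by simp
  qed
  have next_orbit: "orbit_of N y = orbit_of N y'"
    if xy: "orbit_of N x = orbit_of N x'" "adj x y" "adj x' y'" for x y x' y'
  proof -
    have "x' \<in> orbit_of N x"
      using xy adj_in_V orbit_of_eq_iff by metis
    then obtain n where n: "n \<in> N" "x' = n x"
      unfolding orbit_of_def by blast
    have "adj x' (n y)"
      using G_adj[OF _ xy(2)] n N_subset_G by blast
    then have "orbit_of N (n y) = orbit_of N y'"
      using far[of x' "n y" y'] xy(3) by (cases "n y = y'") auto
    moreover have "orbit_of N (n y) = orbit_of N y"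
      using orbit_of_apply n(1) adj_in_V xy(2) by blast
    ultimately show ?thesis
      by simp
  qed
  have "orbit_of N x \<in> {orbit_of N v, orbit_of N u}" if "x \<in> V" for x
  proof (rule connected_graph_induct[where P = "\<lambda>x. orbit_of N x \<in> {orbit_of N v, orbit_of N u}"])
    show "v \<in> V" "orbit_of N v \<in> {orbit_of N v, orbit_of N u}"
      using uvw by simp_all
    show "orbit_of N y \<in> {orbit_of N v, orbit_of N u}"
      if "orbit_of N x \<in> {orbit_of N v, orbit_of N u}" "adj x y" for x y
      using that next_orbit[of v x u y] next_orbit[of u x v y] assms(1) adj_sym by auto
  qed (use connected uvw that in simp_all)
  then have "VN \<subseteq> {orbit_of N v, orbit_of N u}"
    unfolding quot_V_def by blast
  then show False
    using quot_V_not_subset_pair by blast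
qed

lemma cover: "is_cover V adj N"
  unfolding is_cover_def
proof (intro allI impI ballI)
  fix B C v
  assume BC: "adjN B C" "v \<in> B"
  obtain u where u: "u \<in> C" "adj v u"
    using quot_adj_lift[OF BC] by blast
  have "x = u" if "x \<in> C" "adj v x" for x
    using orbit_of_neq_if_common_neighbour[OF that(2) u(2)] mem_quot_V quot_adj_in_quot_V[OF BC(1)]
      that(1) u(1) by metis
  then have "{x \<in> C. adj v x} = {u}"
    using u by blast
  then show "card {x \<in> C. adj v x} = 1"
    by simp
qed

lemma quot_adj_orbit_of: "adj u v \<Longrightarrow> adjN (orbit_of N u) (orbit_of N v)"
  unfolding quot_adj_def
  using orbit_of_in_quot_V orbit_of_self orbit_of_neq_if_adj adj_in_V by blast

lemma walk_project: "walk V adj xs \<Longrightarrow> walk VN adjN (map (orbit_of N) xs)"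
  using walk_map[of V adj xs "orbit_of N" VN adjN] orbit_of_in_quot_V quot_adj_orbit_of by blast

lemma connected_quot: "connected_graph VN adjN"
  unfolding connected_graph_def
proof (intro conjI ballI)
  show "VN \<noteq> {}"
    using connected unfolding connected_graph_def quot_V_def by blast
next
  fix B C
  assume "B \<in> VN" "C \<in> VN"
  then obtain b c where bc: "b \<in> V" "c \<in> V" "B = orbit_of N b" "C = orbit_of N c"
    unfolding quot_V_def by blast
  then obtain xs where xs: "walk V adj xs" "hd xs = b" "last xs = c"
    using connected unfolding connected_graph_def by blast
  then have "xs \<noteq> []"
    by (simp add: walk_def)
  then show "\<exists>Bs. walk VN adjN Bs \<and> hd Bs = B \<and> last Bs = C"
    using walk_project[OF xs(1)] xs(2,3) bc(3,4) by (auto simp: hd_map last_map)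
qed

lemma gdist_quot_le:
  assumes "u \<in> V" "v \<in> V"
  shows "gdist VN adjN (orbit_of N u) (orbit_of N v) \<le> gdist V adj u v"
proof -
  obtain xs where xs: "walk V adj xs" "length xs = gdist V adj u v + 1" "hd xs = u" "last xs = v"
    using obtain_shortest_walk[OF connected assms] .
  then have "xs \<noteq> []"
    by (simp add: walk_def)
  then show ?thesis
    using gdist_le_walk[OF walk_project[OF xs(1)]] xs(2-4) by (simp add: hd_map last_map)
qed

lemma geodesic_lift:
  assumes "geodesic VN adjN i Bs"
  obtains xs where "geodesic V adj i xs" "map (orbit_of N) xs = Bs"
proof -
  obtain xs where xs: "walk V adj xs" "map (orbit_of N) xs = Bs"
    using walk_lift assms unfolding geodesic_def by blast
  have Bs: "distinct Bs" "length Bs = i + 1"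
    "gdist VN adjN (orbit_of N (hd xs)) (orbit_of N (last xs)) = i"
    using assms xs unfolding geodesic_def walk_def by (auto simp: hd_map last_map)
  have "hd xs \<in> V" "last xs \<in> V"
    using xs(1) unfolding walk_def by auto
  then have "i \<le> gdist V adj (hd xs) (last xs)"
    using gdist_quot_le Bs(3) by metis
  moreover have "gdist V adj (hd xs) (last xs) \<le> i"
    using gdist_le_walk[OF xs(1)] xs(2) Bs(2) by auto
  ultimately have "geodesic V adj i xs"
    using xs Bs(1,2) unfolding geodesic_def by (auto simp: distinct_map)
  then show ?thesis
    using that xs(2) by blast
qed

lemma transitive_on_projections:
  assumes "i \<le> 3" "\<And>Bs. Bs \<in> X \<Longrightarrow> \<exists>xs. geodesic V adj i xs \<and> map (orbit_of N) xs = Bs"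
  shows "transitive_on_seqs (quot_action G) X"
  unfolding transitive_on_seqs_def
proof (intro ballI)
  fix Bs Cs
  assume "Bs \<in> X" "Cs \<in> X"
  then obtain xs ys where xs: "geodesic V adj i xs" "map (orbit_of N) xs = Bs"
    and ys: "geodesic V adj i ys" "map (orbit_of N) ys = Cs"
    using assms(2) by metis
  obtain g where g: "g \<in> G" "map g xs = ys"
    using G_transitive_geodesics[OF assms(1) xs(1) ys(1)] by blast
  have "set xs \<subseteq> V"
    using xs(1) unfolding geodesic_def walk_def by blast
  then have "map (image g) Bs = Cs"
    using map_image_orbit_of[OF g(1)] xs(2) ys(2) g(2) by metis
  moreover have "image g \<in> quot_action G"
    unfolding quot_action_def using g(1) by blast
  ultimately show "\<exists>h\<in>quot_action G. map h Bs = Cs"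
    by blast
qed

lemma quot_geodesic_transitive:
  "geodesic_transitive VN adjN (quot_action G) (min 3 (diam VN adjN))"
  unfolding geodesic_transitive_def
proof (intro conjI allI impI)
  show "\<exists>Bs. geodesic VN adjN (min 3 (diam VN adjN)) Bs"
    using geodesic_exists_if_le_diam[OF finite_quot_V connected_quot] by simp
  show "transitive_on_seqs (quot_action G) {Bs. geodesic VN adjN i Bs}"
    if "i \<le> min 3 (diam VN adjN)" for i
    using transitive_on_projections[of i] geodesic_lift that by (metis mem_Collect_eq min.boundedE)
qed

lemma quot_arc_transitive: "arc_transitive VN adjN (quot_action G) 2"
  unfolding arc_transitive_def
proof (intro allI impI)
  fix i :: nat
  assume i: "i \<le> 2"
  have lift: "\<exists>xs. geodesic V adj i xs \<and> map (orbit_of N) xs = Bs" if "arc VN adjN i Bs" for Bs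
    using arc_lift[OF that] geodesic_if_arc i by metis
  show "transitive_on_seqs (quot_action G) {Bs. arc VN adjN i Bs}"
    by (rule transitive_on_projections[of i]) (use i lift in auto)
qed

lemma gdist_image_quot_le:
  "g \<in> G \<Longrightarrow> B \<in> VN \<Longrightarrow> C \<in> VN \<Longrightarrow> gdist VN adjN (g ` B) (g ` C) \<le> gdist VN adjN B C"
  using gdist_map_le[OF connected_quot, of "image g"] image_in_quot_V quot_adj_image by blast

text \<open>A geodesic of \<open>\<Gamma>\<close> is moved by G onto a lift of a geodesic of the quotient, and the
  elements of G do not increase distances in the quotient.\<close>

lemma geodesic_project:
  assumes "geodesic V adj i xs" "i \<le> 3" "i \<le> diam VN adjN"
  shows "geodesic VN adjN i (map (orbit_of N) xs)"
proof -
  obtain Bs where Bs: "geodesic VN adjN i Bs"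
    using geodesic_exists_if_le_diam[OF finite_quot_V connected_quot assms(3)] by blast
  obtain ys where ys: "geodesic V adj i ys" "map (orbit_of N) ys = Bs"
    using geodesic_lift[OF Bs] .
  obtain g where g: "g \<in> G" "map g xs = ys"
    using G_transitive_geodesics[OF assms(2,1) ys(1)] by blast
  have xs: "walk V adj xs" "length xs = i + 1" "gdist V adj (hd xs) (last xs) = i"
    using assms(1) unfolding geodesic_def by auto
  have in_V: "set xs \<subseteq> V" "hd xs \<in> V" "last xs \<in> V"
    using xs(1) unfolding walk_def by auto
  have ne: "xs \<noteq> []"
    using xs(2) by auto
  let ?u = "orbit_of N (hd xs)" and ?v = "orbit_of N (last xs)"
  have "map (image g) (map (orbit_of N) xs) = Bs"
    using map_image_orbit_of[OF g(1) in_V(1)] g(2) ys(2) by simp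
  then have "i = gdist VN adjN (g ` ?u) (g ` ?v)"
    using Bs ne unfolding geodesic_def by (auto simp: hd_map last_map)
  also have "\<dots> \<le> gdist VN adjN ?u ?v"
    using gdist_image_quot_le[OF g(1)] orbit_of_in_quot_V in_V by blast
  finally have "gdist VN adjN ?u ?v = i"
    using gdist_quot_le[OF in_V(2,3)] xs(3) by linarith
  then have "gdist VN adjN (hd (map (orbit_of N) xs)) (last (map (orbit_of N) xs)) = i"
    using ne by (simp add: hd_map last_map)
  then show ?thesis
    using walk_project[OF xs(1)] distinct_if_shortest_walk[OF walk_project[OF xs(1)]] xs(2)
    unfolding geodesic_def by simp
qed

lemma adj_if_quot_adj:
  assumes "u \<in> V" "v \<in> V" "adjN (orbit_of N u) (orbit_of N v)"
    and "gdist V adj u v \<le> min 3 (diam VN adjN)"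
  shows "adj u v"
proof -
  let ?d = "gdist V adj u v"
  have "?d \<noteq> 0"
    using gdist_eq_0_iff[OF connected assms(1,2)] assms(3) simple_quot
    unfolding simple_graph_def by auto
  moreover have "\<not> 2 \<le> ?d"
  proof
    assume "2 \<le> ?d"
    obtain xs where xs: "geodesic V adj ?d xs" "hd xs = u" "last xs = v"
      using geodesic_between[OF connected assms(1,2)] by blast
    then have "xs \<noteq> []"
      unfolding geodesic_def walk_def by blast
    then have "gdist VN adjN (orbit_of N u) (orbit_of N v) = ?d"
      using geodesic_project[OF xs(1)] assms(4) xs(2,3)
      unfolding geodesic_def by (simp add: hd_map last_map)
    moreover have "gdist VN adjN (orbit_of N u) (orbit_of N v) = 1"
      using gdist_eq_1_if_adj[OF simple_quot connected_quot assms(3)] .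
    ultimately show False
      using \<open>2 \<le> ?d\<close> by simp
  qed
  ultimately show ?thesis
    using adj_if_gdist_eq_1[OF connected assms(1,2)] by simp
qed

lemma cycle_lift:
  assumes "is_cycle VN adjN Bs" "length Bs \<le> min 3 (diam VN adjN) + 1"
  shows "\<exists>xs. is_cycle V adj xs \<and> length xs = length Bs"
proof -
  obtain xs where xs: "walk V adj xs" "map (orbit_of N) xs = Bs"
    using walk_lift assms(1) unfolding is_cycle_def by blast
  have ne: "xs \<noteq> []" and in_V: "hd xs \<in> V" "last xs \<in> V"
    using xs(1) unfolding walk_def by auto
  have "adjN (orbit_of N (hd xs)) (orbit_of N (last xs))"
    using assms(1) xs(2) ne simple_quot unfolding is_cycle_def simple_graph_def
    by (auto simp: hd_map last_map)
  moreover have "gdist V adj (hd xs) (last xs) \<le> min 3 (diam VN adjN)"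
    using gdist_le_walk[OF xs(1)] assms(2) xs(2) by auto
  ultimately have "adj (last xs) (hd xs)"
    using adj_if_quot_adj[OF in_V] adj_sym by blast
  then have "is_cycle V adj xs"
    using assms(1) xs unfolding is_cycle_def by (auto simp: distinct_map)
  then show ?thesis
    using xs(2) by auto
qed

lemma cycle_project:
  assumes "is_cycle V adj xs" "length xs = 4 \<or> length xs = 5"
  shows "is_cycle VN adjN (map (orbit_of N) xs)"
proof -
  note edge = orbit_of_neq_if_adj
  note path = orbit_of_neq_if_common_neighbour
  have "distinct (map (orbit_of N) xs)"
    using assms(2)
  proof
    assume "length xs = 4"
    then obtain a b c d where xs: "xs = [a, b, c, d]"
      by (auto simp: length_Suc_conv eval_nat_numeral)
    then have e: "adj a b" "adj b c" "adj c d" "adj d a" "distinct [a, b, c, d]"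
      using assms(1) unfolding is_cycle_def by auto
    have "a \<noteq> c" "b \<noteq> d"
      using e(5) by auto
    then show ?thesis
      using xs edge[OF e(1)] edge[OF e(2)] edge[OF e(3)] not_sym[OF edge[OF e(4)]]
        path[OF adj_sym[OF e(1)] e(2)] path[OF e(1) adj_sym[OF e(4)]] by simp
  next
    assume "length xs = 5"
    then obtain a b c d f where xs: "xs = [a, b, c, d, f]"
      by (auto simp: length_Suc_conv eval_nat_numeral)
    then have e: "adj a b" "adj b c" "adj c d" "adj d f" "adj f a" "distinct [a, b, c, d, f]"
      using assms(1) unfolding is_cycle_def by auto
    have "a \<noteq> c" "b \<noteq> d" "c \<noteq> f" "d \<noteq> a" "f \<noteq> b"
      using e(6) by auto
    then show ?thesis
      using xs edge[OF e(1)] edge[OF e(2)] edge[OF e(3)] edge[OF e(4)] not_sym[OF edge[OF e(5)]]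
        path[OF adj_sym[OF e(1)] e(2)] path[OF adj_sym[OF e(2)] e(3)] path[OF adj_sym[OF e(3)] e(4)]
        not_sym[OF path[OF adj_sym[OF e(4)] e(5)]] not_sym[OF path[OF adj_sym[OF e(5)] e(1)]]
      by simp
  qed
  moreover have "xs \<noteq> []"
    using assms(2) by auto
  ultimately show ?thesis
    using assms(1) walk_project quot_adj_orbit_of unfolding is_cycle_def
    by (simp add: hd_map last_map)
qed

lemma quot_cycle_length_ge_4:
  assumes "\<not> complete_graph VN adjN" "is_cycle VN adjN Bs"
  shows "4 \<le> length Bs"
proof (rule ccontr)
  assume "\<not> 4 \<le> length Bs"
  then have "length Bs \<le> min 3 (diam VN adjN) + 1"
    using diam_ge_2_if_not_complete[OF simple_quot connected_quot assms(1)] by simp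
  then show False
    using cycle_lift[OF assms(2)] cycle_length_ge_4 \<open>\<not> 4 \<le> length Bs\<close> by fastforce
qed

lemma quot_girth_4_or_5:
  assumes "\<not> complete_graph VN adjN"
  shows "has_girth VN adjN 4 \<or> has_girth VN adjN 5"
proof -
  obtain xs where "is_cycle V adj xs" "length xs = 4 \<or> length xs = 5"
    using girth unfolding has_girth_def by blast
  then show ?thesis
    using has_girth_4_or_5_if_cycles_ge_4 cycle_project quot_cycle_length_ge_4[OF assms]
    by (metis length_map)
qed

lemma quot_girth_eq:
  assumes "3 \<le> diam VN adjN" "has_girth V adj g"
  shows "has_girth VN adjN g"
  unfolding has_girth_def
proof (intro conjI allI impI)
  have g: "g = 4 \<or> g = 5"
    using girth has_girth_unique[OF assms(2)] by blast
  obtain xs where "is_cycle V adj xs" "length xs = g"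
    using assms(2) unfolding has_girth_def by blast
  then show "\<exists>Bs. is_cycle VN adjN Bs \<and> length Bs = g"
    using cycle_project g by (metis length_map)
  fix Bs
  assume Bs: "is_cycle VN adjN Bs"
  show "g \<le> length Bs"
  proof (cases "length Bs \<le> 4")
    case True
    then show ?thesis
      using cycle_lift[OF Bs] assms girth_le_cycle_length by fastforce
  qed (use g in linarith)
qed

lemma quot_strongly_regular:
  assumes "diam VN adjN = 2"
  shows "\<exists>n k a c. strongly_regular VN adjN n k a c"
  using strongly_regular_if_geodesic_transitive[OF simple_quot connected_quot assms]
    quot_geodesic_transitive inj_endomorphisms_quot_action assms by simp

lemma quot_complete_or_strongly_regular_or_girth_eq:
  "complete_graph VN adjN
   \<or> ((\<exists>n k a c. strongly_regular VN adjN n k a c)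
      \<and> arc_transitive VN adjN (quot_action G) 2
      \<and> (has_girth VN adjN 4 \<or> has_girth VN adjN 5))
   \<or> (3 \<le> diam VN adjN \<and> (\<exists>g. has_girth V adj g \<and> has_girth VN adjN g))"
proof (cases "complete_graph VN adjN")
  case False
  consider "diam VN adjN = 2" | "3 \<le> diam VN adjN"
    using diam_ge_2_if_not_complete[OF simple_quot connected_quot False] by linarith
  then show ?thesis
  proof cases
    case 1
    then show ?thesis
      using quot_strongly_regular quot_arc_transitive quot_girth_4_or_5[OF False] by blast
  next
    case 2
    then show ?thesis
      using girth quot_girth_eq by blast
  qed
qed simp

end

theorem theorem1p1:
  fixes V :: "'a set" and adj :: "'a \<Rightarrow> 'a \<Rightarrow> bool" and G N :: "('a \<Rightarrow> 'a) set"
  assumes "simple_graph V adj"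
    and "connected_graph V adj"
    and "aut_subgroup V adj G"
    and "geodesic_transitive V adj G 3"
    and "has_girth V adj 4 \<or> has_girth V adj 5"
    and "N \<lhd> (BijGroup V)\<lparr>carrier := G\<rparr>"
    and "card (quot_V V N) \<ge> 3"
  shows "is_cover V adj N
    \<and> geodesic_transitive (quot_V V N) (quot_adj V adj N) (quot_action G)
        (min 3 (diam (quot_V V N) (quot_adj V adj N)))
    \<and> (complete_graph (quot_V V N) (quot_adj V adj N)
       \<or> ((\<exists>n k a c. strongly_regular (quot_V V N) (quot_adj V adj N) n k a c)
          \<and> arc_transitive (quot_V V N) (quot_adj V adj N) (quot_action G) 2
          \<and> (has_girth (quot_V V N) (quot_adj V adj N) 4 \<or> has_girth (quot_V V N) (quot_adj V adj N) 5))
       \<or> (diam (quot_V V N) (quot_adj V adj N) \<ge> 3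
          \<and> (\<exists>g. has_girth V adj g \<and> has_girth (quot_V V N) (quot_adj V adj N) g)))"
proof -
  interpret geodesic_transitive_quotient V adj G N
    using assms
    by (simp add: geodesic_transitive_quotient_def geodesic_transitive_quotient_axioms_def
        normal_quotient_def)
  show ?thesis
    using cover quot_geodesic_transitive quot_complete_or_strongly_regular_or_girth_eq by blast
qed

end
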